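(* Let $p$ be a prime and $b$ an integer with $0<b<p$. If $(p-b)(p-b^{-1})=2p+1$, then $|\mathrm{inv}_{1,b}|=5$.
   Context: Let $S=\mathbb{C}[x_1,x_2]$, $\zeta=e^{2\pi i/p}$, $G=\mathbb{Z}/p\mathbb{Z}=\langle\zeta\rangle$ acting on $S$ by $x_1\mapsto\zeta x_1$, $x_2\mapsto\zeta^bx_2$, with invariant ring $S^G_{1,b}$ (spanned by monomials $x_1^cx_2^d$ with $c+bd\equiv0\pmod p$). $\mathrm{inv}_{1,b}$ denotes the minimal set of monomial generators of $S^G_{1,b}$ as a $\mathbb{C}$-algebra: the nonconstant invariant monomials that are not a product of two nonconstant invariant monomials. $b^{-1}$ is the unique integer $0<b^{-1}<p$ with $bb^{-1}\equiv1\pmod p$. *)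

theory Defs
  imports "HOL-Number_Theory.Number_Theory"
begin

text \<open>A monomial x1^c x2^d of C[x1,x2] is represented by its exponent pair (c,d).
  It is invariant under x1 -> zeta x1, x2 -> zeta^b x2 iff c + b d = 0 mod p.\<close>

definition invariant_monomial :: "nat \<Rightarrow> nat \<Rightarrow> nat \<times> nat \<Rightarrow> bool" where
  "invariant_monomial p b m \<longleftrightarrow> [fst m + b * snd m = 0] (mod p)"

definition nonconst_invariant :: "nat \<Rightarrow> nat \<Rightarrow> nat \<times> nat \<Rightarrow> bool" where
  "nonconst_invariant p b m \<longleftrightarrow> m \<noteq> (0, 0) \<and> invariant_monomial p b m"

text \<open>inv_{1,b}: nonconstant invariant monomials that are not a product of two
  nonconstant invariant monomials (product of monomials = sum of exponent pairs).\<close>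

definition inv_gens :: "nat \<Rightarrow> nat \<Rightarrow> (nat \<times> nat) set" where
  "inv_gens p b = {m. nonconst_invariant p b m \<and>
     \<not> (\<exists>m1 m2. nonconst_invariant p b m1 \<and> nonconst_invariant p b m2 \<and>
               fst m1 + fst m2 = fst m \<and> snd m1 + snd m2 = snd m)}"

definition binv :: "nat \<Rightarrow> nat \<Rightarrow> nat" where
  "binv p b = (THE x. 0 < x \<and> x < p \<and> [b * x = 1] (mod p))"

end

theory Submission
  imports Defs "HOL-Library.Product_Order" "HOL-Library.Product_Plus"
begin

text \<open>Write \<open>q = p - b\<close> and \<open>a = p - b\<inverse>\<close>. The exponent pairs of invariant monomials form
  the lattice \<open>L = {(c,d). c + b d \<equiv> 0 (mod p)}\<close> of index \<open>p\<close> in \<open>\<int>\<^sup>2\<close>, intersected with \<open>\<nat>\<^sup>2\<close>,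
  and \<open>inv\<^sub>1\<^sub>,\<^sub>b\<close> is the set of componentwise minimal nonzero points of \<open>L \<inter> \<nat>\<^sup>2\<close>.
  The hypothesis \<open>q a = 2p + 1\<close> forces \<open>q = 2s + 1\<close>, \<open>a = 2t + 1\<close> and \<open>p = 2st + s + t\<close>.
  The five points \<open>(p,0), (q,1), (s+1,t+1), (1,2t+1), (0,p)\<close> lie in \<open>L\<close>, are pairwise
  incomparable, and consecutive ones span parallelograms of area \<open>p\<close>, so each consecutive
  pair is a basis of \<open>L\<close>. The cones spanned by these pairs cover the quadrant, hence every
  nonzero point of \<open>L \<inter> \<nat>\<^sup>2\<close> is a nonnegative integer combination of some consecutive pair
  and thus dominates one of the five points. So the five points are exactly the minimal ones.\<close>

lemma minimal_elements_eq_antichain_cover: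
  fixes G S :: "'a::order set"
  assumes "G \<subseteq> S"
    and cover: "\<forall>x\<in>S. \<exists>g\<in>G. g \<le> x"
    and antichain: "\<forall>g\<in>G. \<forall>g'\<in>G. g' \<le> g \<longrightarrow> g' = g"
  shows "{x\<in>S. \<forall>y\<in>S. y \<le> x \<longrightarrow> y = x} = G"
proof
  show "{x\<in>S. \<forall>y\<in>S. y \<le> x \<longrightarrow> y = x} \<subseteq> G"
    using cover assms(1) by blast
  show "G \<subseteq> {x\<in>S. \<forall>y\<in>S. y \<le> x \<longrightarrow> y = x}"
  proof safe
    fix g y assume "g \<in> G" "y \<in> S" "y \<le> g"
    then obtain g' where "g' \<in> G" "g' \<le> y" using cover by blast
    with \<open>g \<in> G\<close> \<open>y \<le> g\<close> have "g' = g" using antichain order_trans by blast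
    with \<open>g' \<le> y\<close> \<open>y \<le> g\<close> show "y = g" by simp
  qed (use assms(1) in auto)
qed

lemma invariant_monomial_iff_dvd:
  "invariant_monomial p b m \<longleftrightarrow> int p dvd int (fst m) + int b * int (snd m)"
  unfolding invariant_monomial_def cong_0_iff by (metis of_nat_dvd_iff of_nat_add of_nat_mult)

lemma invariant_monomial_diff:
  assumes "invariant_monomial p b m" "invariant_monomial p b g" "g \<le> m"
  shows "invariant_monomial p b (m - g)"
proof -
  have "int (fst (m - g)) + int b * int (snd (m - g))
      = (int (fst m) + int b * int (snd m)) - (int (fst g) + int b * int (snd g))"
    using \<open>g \<le> m\<close> by (simp add: less_eq_prod_def of_nat_diff algebra_simps)
  then show ?thesis
    using assms(1,2) by (simp add: invariant_monomial_iff_dvd dvd_diff)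
qed

lemma inv_gens_eq_minimal:
  "inv_gens p b = {m \<in> Collect (nonconst_invariant p b).
     \<forall>m' \<in> Collect (nonconst_invariant p b). m' \<le> m \<longrightarrow> m' = m}"
proof -
  have "(\<exists>m1 m2. nonconst_invariant p b m1 \<and> nonconst_invariant p b m2 \<and>
          fst m1 + fst m2 = fst m \<and> snd m1 + snd m2 = snd m)
      \<longleftrightarrow> (\<exists>m'. nonconst_invariant p b m' \<and> m' \<le> m \<and> m' \<noteq> m)"
    if "nonconst_invariant p b m" for m
  proof
    assume "\<exists>m1 m2. nonconst_invariant p b m1 \<and> nonconst_invariant p b m2 \<and>
              fst m1 + fst m2 = fst m \<and> snd m1 + snd m2 = snd m"
    then obtain m1 m2 where "nonconst_invariant p b m1" "nonconst_invariant p b m2"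
      "fst m1 + fst m2 = fst m" "snd m1 + snd m2 = snd m" by blast
    then show "\<exists>m'. nonconst_invariant p b m' \<and> m' \<le> m \<and> m' \<noteq> m"
      by (intro exI[of _ m1]) (auto simp: nonconst_invariant_def less_eq_prod_def prod_eq_iff)
  next
    assume "\<exists>m'. nonconst_invariant p b m' \<and> m' \<le> m \<and> m' \<noteq> m"
    then obtain m' where m': "nonconst_invariant p b m'" "m' \<le> m" "m' \<noteq> m" by blast
    have "nonconst_invariant p b (m - m')"
      using m' that invariant_monomial_diff[of p b m m']
      by (auto simp: nonconst_invariant_def less_eq_prod_def prod_eq_iff)
    with m' show "\<exists>m1 m2. nonconst_invariant p b m1 \<and> nonconst_invariant p b m2 \<and>
              fst m1 + fst m2 = fst m \<and> snd m1 + snd m2 = snd m"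
      by (intro exI[of _ m'] exI[of _ "m - m'"]) (auto simp: less_eq_prod_def)
  qed
  then show ?thesis
    unfolding inv_gens_def by blast
qed

definition det2 :: "nat \<times> nat \<Rightarrow> nat \<times> nat \<Rightarrow> int" where
  "det2 u v = int (fst u) * int (snd v) - int (snd u) * int (fst v)"

lemma invariant_monomial_dvd_det2:
  assumes "invariant_monomial p b u" "invariant_monomial p b v"
  shows "int p dvd det2 u v"
proof -
  have "det2 u v = (int (fst u) + int b * int (snd u)) * int (snd v)
                 - int (snd u) * (int (fst v) + int b * int (snd v))"
    by (simp add: det2_def algebra_simps)
  then show ?thesis
    using assms by (simp add: invariant_monomial_iff_dvd)
qed

text \<open>Cramer's rule gives \<open>p v = det(v,w) u + det(u,v) w\<close>; the hypotheses make both
  coefficients nonnegative integers.\<close>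

lemma dominates_in_unimodular_cone:
  assumes det_uw: "det2 u w = int p" and "0 < p"
    and "int p dvd det2 u v" "int p dvd det2 v w"
    and "0 \<le> det2 u v" "0 \<le> det2 v w" "v \<noteq> 0"
  shows "u \<le> v \<or> w \<le> v"
proof -
  have cramer: "int p * int (fst v) = det2 v w * int (fst u) + det2 u v * int (fst w)"
               "int p * int (snd v) = det2 v w * int (snd u) + det2 u v * int (snd w)"
    unfolding det_uw[symmetric] by (simp_all add: det2_def algebra_simps)
  show ?thesis
  proof (cases "det2 v w = 0")
    case True
    have "det2 u v \<noteq> 0"
      using cramer \<open>0 < p\<close> \<open>v \<noteq> 0\<close> True by (auto simp: prod_eq_iff)
    then have "int p \<le> det2 u v"
      using \<open>int p dvd det2 u v\<close> \<open>0 \<le> det2 u v\<close> by (simp add: zdvd_imp_le)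
    then have "int p * int (fst w) \<le> int p * int (fst v)" "int p * int (snd w) \<le> int p * int (snd v)"
      using cramer True by (simp_all add: mult_right_mono)
    then have "w \<le> v"
      using \<open>0 < p\<close> by (simp add: less_eq_prod_def)
    then show ?thesis ..
  next
    case False
    then have "int p \<le> det2 v w"
      using \<open>int p dvd det2 v w\<close> \<open>0 \<le> det2 v w\<close> by (simp add: zdvd_imp_le)
    moreover have "0 \<le> det2 u v * int (fst w)" "0 \<le> det2 u v * int (snd w)"
      using \<open>0 \<le> det2 u v\<close> by simp_all
    ultimately have "int p * int (fst u) \<le> int p * int (fst v)" "int p * int (snd u) \<le> int p * int (snd v)"
      using cramer by (simp_all add: mult_right_mono add_increasing2)
    then have "u \<le> v"
      using \<open>0 < p\<close> by (simp add: less_eq_prod_def)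
    then show ?thesis ..
  qed
qed

context
  fixes p b s t :: nat
  assumes p_eq: "p = 2*s*t + s + t"
    and b_eq: "b + (2*s + 1) = p"
    and s_pos: "0 < s" and t_pos: "0 < t"
begin

lemma generators_nonconst_invariant:
  "\<forall>g \<in> {(p,0), (2*s+1,1), (s+1,t+1), (1,2*t+1), (0,p)}. nonconst_invariant p b g"
proof -
  have b: "int b = int p - (2 * int s + 1)"
    using b_eq by linarith
  have p: "int p = 2 * int s * int t + int s + int t"
    using p_eq by simp
  have "int (2*s+1) + int b = int p"
       "int (s+1) + int b * int (t+1) = int p * int t"
       "1 + int b * int (2*t+1) = int p * (2 * int t - 1)"
    unfolding b by (simp_all add: p algebra_simps)
  then have "int p dvd int (fst g) + int b * int (snd g)"
    if "g \<in> {(p,0), (2*s+1,1), (s+1,t+1), (1,2*t+1), (0,p)}" for g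
    using that by (auto simp: dvd_def)
  moreover have "0 < p"
    using p_eq s_pos by simp
  ultimately show ?thesis
    by (auto simp: nonconst_invariant_def invariant_monomial_iff_dvd)
qed

lemma nonconst_invariant_dominates_generator:
  assumes "nonconst_invariant p b m"
  shows "\<exists>g \<in> {(p,0), (2*s+1,1), (s+1,t+1), (1,2*t+1), (0,p)}. g \<le> m"
    (is "\<exists>g \<in> ?G. g \<le> m")
proof -
  have p_pos: "0 < p"
    using p_eq s_pos by simp
  have m: "invariant_monomial p b m" "m \<noteq> 0"
    using assms by (simp_all add: nonconst_invariant_def zero_prod_def)
  have cone: "g \<le> m \<or> g' \<le> m"
    if "g \<in> ?G" "g' \<in> ?G" "det2 g g' = int p" "0 \<le> det2 g m" "0 \<le> det2 m g'" for g g'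
  proof -
    have "invariant_monomial p b g" "invariant_monomial p b g'"
      using that(1,2) generators_nonconst_invariant by (auto simp: nonconst_invariant_def)
    then show ?thesis
      using dominates_in_unimodular_cone[OF that(3) p_pos _ _ that(4,5) m(2)]
        invariant_monomial_dvd_det2 m(1) by blast
  qed
  have p: "int p = 2 * int s * int t + int s + int t"
    using p_eq by simp
  have dets: "det2 (p,0) (2*s+1,1) = int p" "det2 (2*s+1,1) (s+1,t+1) = int p"
    "det2 (s+1,t+1) (1,2*t+1) = int p" "det2 (1,2*t+1) (0,p) = int p"
    by (simp_all add: det2_def p algebra_simps)
  have antisym: "det2 g m = - det2 m g" for g
    by (simp add: det2_def)
  have first: "0 \<le> det2 (p,0) m" and last: "0 \<le> det2 m (0,p)"
    by (simp_all add: det2_def)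
  consider "0 \<le> det2 m (2*s+1,1)"
    | "0 \<le> det2 (2*s+1,1) m" "0 \<le> det2 m (s+1,t+1)"
    | "0 \<le> det2 (s+1,t+1) m" "0 \<le> det2 m (1,2*t+1)"
    | "0 \<le> det2 (1,2*t+1) m"
    using antisym by fastforce
  then show ?thesis
  proof cases
    case 1
    then show ?thesis using cone[of "(p,0)" "(2*s+1,1)"] dets(1) first by auto
  next
    case 2
    then show ?thesis using cone[of "(2*s+1,1)" "(s+1,t+1)"] dets(2) by auto
  next
    case 3
    then show ?thesis using cone[of "(s+1,t+1)" "(1,2*t+1)"] dets(3) by auto
  next
    case 4
    then show ?thesis using cone[of "(1,2*t+1)" "(0,p)"] dets(4) last by auto
  qed
qed

lemma generators_bounded: "2*s + 1 < p" "2*t + 1 < p"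
proof -
  have "s \<le> s*t" "t \<le> s*t"
    using s_pos t_pos by simp_all
  then show "2*s + 1 < p" "2*t + 1 < p"
    using p_eq s_pos t_pos unfolding mult.assoc by linarith+
qed

lemma inv_gens_eq_generators:
  "inv_gens p b = {(p,0), (2*s+1,1), (s+1,t+1), (1,2*t+1), (0,p)}"
proof -
  have "\<forall>g \<in> {(p,0), (2*s+1,1), (s+1,t+1), (1,2*t+1), (0,p)}.
      \<forall>g' \<in> {(p,0), (2*s+1,1), (s+1,t+1), (1,2*t+1), (0,p)}. g' \<le> g \<longrightarrow> g' = g"
    using generators_bounded s_pos t_pos by auto
  then show ?thesis
    unfolding inv_gens_eq_minimal
    using generators_nonconst_invariant nonconst_invariant_dominates_generator
    by (intro minimal_elements_eq_antichain_cover) auto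
qed

lemma card_inv_gens: "card (inv_gens p b) = 5"
  unfolding inv_gens_eq_generators using generators_bounded s_pos t_pos by auto

end

lemma product_eq_2p_plus_1_parametrization:
  fixes p b c :: nat
  assumes "b < p" and "(int p - int b) * (int p - int c) = 2 * int p + 1"
  obtains s t where "0 < s" "0 < t" "b + (2*s + 1) = p" "p = 2*s*t + s + t"
proof -
  define Q A where "Q = int p - int b" and "A = int p - int c"
  have "0 < Q" "Q * A = 2 * int p + 1"
    using assms unfolding Q_def A_def by simp_all
  then have "0 < A"
    using zero_less_mult_pos[of Q A] by linarith
  have "odd (Q * A)"
    using \<open>Q * A = 2 * int p + 1\<close> by simp
  then have "odd Q" "odd A"
    by auto
  then obtain S T where S: "Q = 2*S + 1" and T: "A = 2*T + 1"
    by (meson oddE)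
  have "0 \<le> S" "0 \<le> T"
    using \<open>0 < Q\<close> \<open>0 < A\<close> S T by simp_all
  have p: "int p = 2*S*T + S + T"
    using \<open>Q * A = 2 * int p + 1\<close> unfolding S T by (simp add: algebra_simps)
  \<comment> \<open>\<open>S = 0\<close> would force \<open>c = -p - 1\<close>, and \<open>T = 0\<close> would force \<open>b = -p - 1\<close>.\<close>
  have "S \<noteq> 0"
    using T p A_def by auto
  moreover have "T \<noteq> 0"
    using S p Q_def by auto
  ultimately have "0 < S" "0 < T"
    using \<open>0 \<le> S\<close> \<open>0 \<le> T\<close> by simp_all
  then obtain s t where st: "S = int s" "T = int t"
    by (metis zero_le_imp_eq_int less_imp_le)
  show ?thesis
  proof (rule that)
    show "0 < s" "0 < t"
      using \<open>0 < S\<close> \<open>0 < T\<close> st by simp_all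
    show "b + (2*s + 1) = p"
      using S Q_def st by linarith
    have "int p = int (2*s*t + s + t)"
      using p st by simp
    then show "p = 2*s*t + s + t"
      by (simp only: of_nat_eq_iff)
  qed
qed

theorem proposition5p1:
  fixes p b :: nat
  assumes "prime p" and "0 < b" and "b < p"
    and "(int p - int b) * (int p - int (binv p b)) = 2 * int p + 1"
  shows "card (inv_gens p b) = 5"
proof -
  obtain s t where "0 < s" "0 < t" "b + (2*s + 1) = p" "p = 2*s*t + s + t"
    using product_eq_2p_plus_1_parametrization[OF assms(3,4)] .
  then show ?thesis
    using card_inv_gens by blast
qed

end
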